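(* Let $(\mathbb{X},d,\mu)$ be a metric measure space, $\Omega\subset\mathbb{X}$ a domain and $\varrho$ an admissible radius function in $\Omega$. Then for every $u\in L^\infty(\Omega)$, all $x,y\in\Omega$ and every $n\in\mathbb{N}$, $$|\mathcal{M}^nu(x)-\mathcal{M}^nu(y)|\leq2\|u\|_\infty\frac{\mu(B_x\triangle B_y)}{\max\{\mu(B_x),\mu(B_y)\}}.$$
   Context: A metric measure space $(\mathbb{X},d,\mu)$ is a metric space with a positive Borel regular measure $\mu$ with $0<\mu(B)<\infty$ for every ball $B$. An admissible radius function in $\Omega$ is $\varrho\in C(\overline\Omega)$, $\varrho\ge0$, with $0<\varrho(x)\leq\mathrm{dist}(x,\partial\Omega)$ for $x\in\Omega$ and $\varrho=0$ exactly on $\partial\Omega$. For $x\in\Omega$, $B_x=\overline{B}(x,\varrho(x))$ and $\mathcal{M}u(x)=\frac{1}{\mu(B_x)}\int_{B_x}u\,d\mu$; $\mathcal{M}^n$ is the $n$-th iterate. $A\triangle B=(A\setminus B)\cup(B\setminus A)$. *)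

theory Defs
  imports "HOL-Analysis.Analysis" "HOL-Probability.Essential_Supremum"
begin

definition mm_space :: "'a::metric_space measure \<Rightarrow> bool" where
  "mm_space \<mu> \<longleftrightarrow> sets \<mu> = sets borel \<and>
     (\<forall>x r. r > 0 \<longrightarrow> 0 < emeasure \<mu> (ball x r) \<and> emeasure \<mu> (ball x r) < \<infinity>
                       \<and> 0 < emeasure \<mu> (cball x r) \<and> emeasure \<mu> (cball x r) < \<infinity>)"

definition domain :: "'a::metric_space set \<Rightarrow> bool" where
  "domain \<Omega> \<longleftrightarrow> open \<Omega> \<and> connected \<Omega> \<and> \<Omega> \<noteq> {}"

definition admissible_radius :: "'a::metric_space set \<Rightarrow> ('a \<Rightarrow> real) \<Rightarrow> bool" where
  "admissible_radius \<Omega> \<rho> \<longleftrightarrow> continuous_on (closure \<Omega>) \<rho> \<and>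
     (\<forall>x\<in>closure \<Omega>. \<rho> x \<ge> 0) \<and>
     (\<forall>x\<in>\<Omega>. 0 < \<rho> x \<and> \<rho> x \<le> infdist x (frontier \<Omega>)) \<and>
     (\<forall>x\<in>closure \<Omega>. \<rho> x = 0 \<longleftrightarrow> x \<in> frontier \<Omega>)"

definition Bx :: "('a::metric_space \<Rightarrow> real) \<Rightarrow> 'a \<Rightarrow> 'a set" where
  "Bx \<rho> x = cball x (\<rho> x)"

text \<open>Averaging operator. Functions live on Omega: the integrand is u restricted to
  Omega (extended by zero), and the result is set to 0 outside Omega.\<close>
definition avg_op :: "'a::metric_space measure \<Rightarrow> 'a set \<Rightarrow> ('a \<Rightarrow> real) \<Rightarrow> ('a \<Rightarrow> real) \<Rightarrow> 'a \<Rightarrow> real" where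
  "avg_op \<mu> \<Omega> \<rho> u x = (if x \<in> \<Omega> then
      (1 / measure \<mu> (Bx \<rho> x)) * (LINT z:(Bx \<rho> x \<inter> \<Omega>)|\<mu>. u z) else 0)"

definition Linf_norm :: "'a::metric_space measure \<Rightarrow> 'a set \<Rightarrow> ('a \<Rightarrow> real) \<Rightarrow> ereal" where
  "Linf_norm \<mu> \<Omega> u = esssup (restrict_space \<mu> \<Omega>) (\<lambda>x. ereal \<bar>u x\<bar>)"

definition in_Linf :: "'a::metric_space measure \<Rightarrow> 'a set \<Rightarrow> ('a \<Rightarrow> real) \<Rightarrow> bool" where
  "in_Linf \<mu> \<Omega> u \<longleftrightarrow> u \<in> borel_measurable (restrict_space \<mu> \<Omega>) \<and> Linf_norm \<mu> \<Omega> u < \<infinity>"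

end

theory Submission
  imports Defs
begin

text \<open>Split both averages along \<open>B\<^sub>x \<inter> B\<^sub>y\<close>: the common integral enters only through the two
  normalisations, and everything else is an integral over part of \<open>B\<^sub>x \<triangle> B\<^sub>y\<close>, so an elementary
  estimate bounds the difference by \<open>2 \<parallel>v\<parallel>\<^sub>\<infinity> \<mu>(B\<^sub>x \<triangle> B\<^sub>y) / max(\<mu>(B\<^sub>x), \<mu>(B\<^sub>y))\<close>.
  Since \<open>\<M>\<close> does not increase the sup norm, taking \<open>v = \<M>\<^sup>n\<^sup>-\<^sup>1 u\<close> gives the claim.
  The real work is that \<open>\<M>\<close> maps bounded measurable functions to measurable ones: for \<open>w \<ge> 0\<close>
  the map \<open>x \<mapsto> \<integral>\<^bsub>B\<^sub>x\<^esub> w\<close> is upper semicontinuous, because \<open>\<rho>\<close> is continuous and closed balls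
  decrease to the closed ball as the radius decreases.\<close>

lemma set_integrable_bounded:
  fixes f :: "'a \<Rightarrow> real"
  assumes "S \<in> sets M" "emeasure M S < \<infinity>" "f \<in> borel_measurable M"
    and "AE z in M. \<bar>f z\<bar> \<le> C"
  shows "set_integrable M S f"
  unfolding set_integrable_def
  by (rule integrableI_bounded_set_indicator[where B=C]) (use assms in auto)

lemma set_integral_abs_le_measure:
  fixes f :: "'a \<Rightarrow> real"
  assumes S: "S \<in> sets M" "emeasure M S < \<infinity>"
    and bound: "AE z in M. z \<in> S \<longrightarrow> \<bar>f z\<bar> \<le> C" and "0 \<le> C"
  shows "\<bar>LINT z:S|M. f z\<bar> \<le> C * measure M S"
proof -
  have "\<bar>LINT z:S|M. f z\<bar> \<le> (\<integral>z. \<bar>indicator S z *\<^sub>R f z\<bar> \<partial>M)"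
    unfolding set_lebesgue_integral_def by (rule integral_abs_bound)
  also have "\<dots> \<le> (\<integral>z. indicator S z *\<^sub>R C \<partial>M)"
    by (rule integral_mono_AE') (use assms in \<open>auto split: split_indicator\<close>)
  also have "\<dots> = C * measure M S"
    using S by (simp add: has_bochner_integral_indicator[THEN has_bochner_integral_integral_eq])
  finally show ?thesis .
qed

lemma abs_diff_quotients_le:
  fixes K P Q k p q C :: real
  assumes "0 \<le> k" "0 \<le> p" "0 \<le> q" "q \<le> p" "0 < k + q" "0 \<le> C"
    and "\<bar>K\<bar> \<le> C * k" "\<bar>P\<bar> \<le> C * p" "\<bar>Q\<bar> \<le> C * q"
  shows "\<bar>(K + P) / (k + p) - (K + Q) / (k + q)\<bar> \<le> 2 * C * (p + q) / (k + p)"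
proof -
  define a b where "a = k + p" and "b = k + q"
  have ab: "0 < b" "b \<le> a" using assms by (auto simp: a_def b_def)
  have "\<bar>K * (b - a) + P * b - Q * a\<bar> \<le> \<bar>K\<bar> * (a - b) + \<bar>P\<bar> * b + \<bar>Q\<bar> * a"
    using ab abs_triangle_ineq4[of "K * (b - a) + P * b" "Q * a"] abs_triangle_ineq[of "K * (b - a)" "P * b"]
    by (simp add: abs_mult)
  also have "\<dots> \<le> C * k * (a - b) + C * p * b + C * q * a"
    using ab assms by (intro add_mono mult_right_mono) auto
  also have "\<dots> = C * (2 * k * p + 2 * p * q)"
    by (simp add: a_def b_def algebra_simps)
  also have "\<dots> \<le> 2 * C * (p + q) * b"
    using assms by (simp add: b_def mult_left_mono algebra_simps)
  finally have "\<bar>K * (b - a) + P * b - Q * a\<bar> / (a * b) \<le> 2 * C * (p + q) / a"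
    using ab by (simp add: divide_le_eq)
  moreover have "(K + P) / a - (K + Q) / b = (K * (b - a) + P * b - Q * a) / (a * b)"
    using ab by (simp add: field_simps)
  ultimately show ?thesis
    using ab by (simp add: a_def b_def abs_div)
qed

lemma abs_diff_set_averages_le:
  fixes f :: "'a \<Rightarrow> real"
  assumes A: "A \<in> sets M" "emeasure M A < \<infinity>" and B: "B \<in> sets M" "emeasure M B < \<infinity>"
    and le: "measure M B \<le> measure M A" and pos: "0 < measure M B"
    and f: "f \<in> borel_measurable M" "AE z in M. \<bar>f z\<bar> \<le> C" and "0 \<le> C"
  shows "\<bar>(LINT z:A|M. f z) / measure M A - (LINT z:B|M. f z) / measure M B\<bar>
     \<le> 2 * C * measure M (A \<union> B - A \<inter> B) / measure M A"
proof -
  have fin: "emeasure M S < \<infinity>" if "S \<in> sets M" "S \<subseteq> A \<union> B" for S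
  proof -
    have "emeasure M S \<le> emeasure M A + emeasure M B"
      using emeasure_mono[OF that(2) sets.Un[OF A(1) B(1)]] emeasure_subadditive[OF A(1) B(1)]
      by (rule order_trans)
    also have "\<dots> < \<infinity>" using A B by (simp add: ennreal_add_less_top)
    finally show ?thesis .
  qed
  have pieces: "A \<inter> B \<in> sets M" "A - B \<in> sets M" "B - A \<in> sets M"
    using A B by auto
  have int_split: "(LINT z:S \<union> T|M. f z) = (LINT z:S|M. f z) + (LINT z:T|M. f z)"
    and measure_split: "measure M (S \<union> T) = measure M S + measure M T"
    if "S \<in> sets M" "T \<in> sets M" "S \<subseteq> A \<union> B" "T \<subseteq> A \<union> B" "S \<inter> T = {}" for S T
    using that fin[of S] fin[of T] f
    by (auto intro!: set_integral_Un measure_Union set_integrable_bounded)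
  have sub: "A \<inter> B \<subseteq> A \<union> B" "A - B \<subseteq> A \<union> B" "B - A \<subseteq> A \<union> B"
    and disj: "A \<inter> B \<inter> (A - B) = {}" "A \<inter> B \<inter> (B - A) = {}" "(A - B) \<inter> (B - A) = {}"
    and dec: "A \<inter> B \<union> (A - B) = A" "A \<inter> B \<union> (B - A) = B" "(A - B) \<union> (B - A) = A \<union> B - A \<inter> B"
    by blast+
  have I: "(LINT z:A|M. f z) = (LINT z:A \<inter> B|M. f z) + (LINT z:A - B|M. f z)"
      "(LINT z:B|M. f z) = (LINT z:A \<inter> B|M. f z) + (LINT z:B - A|M. f z)"
    using int_split[OF pieces(1,2) sub(1,2) disj(1)] int_split[OF pieces(1,3) sub(1,3) disj(2)]
    unfolding dec .
  have m: "measure M A = measure M (A \<inter> B) + measure M (A - B)"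
      "measure M B = measure M (A \<inter> B) + measure M (B - A)"
      "measure M (A \<union> B - A \<inter> B) = measure M (A - B) + measure M (B - A)"
    using measure_split[OF pieces(1,2) sub(1,2) disj(1)] measure_split[OF pieces(1,3) sub(1,3) disj(2)]
      measure_split[OF pieces(2,3) sub(2,3) disj(3)]
    unfolding dec .
  have "\<bar>LINT z:S|M. f z\<bar> \<le> C * measure M S" if "S \<in> sets M" "S \<subseteq> A \<union> B" for S
    using that fin f(2) \<open>0 \<le> C\<close> by (auto intro!: set_integral_abs_le_measure)
  then show ?thesis
    unfolding I m using pieces le pos \<open>0 \<le> C\<close> m
    by (intro abs_diff_quotients_le) auto
qed

lemma abs_diff_set_averages_le_max:
  fixes f :: "'a \<Rightarrow> real"
  assumes A: "A \<in> sets M" "emeasure M A < \<infinity>" and B: "B \<in> sets M" "emeasure M B < \<infinity>"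
    and pos: "0 < measure M A" "0 < measure M B"
    and f: "f \<in> borel_measurable M" "AE z in M. \<bar>f z\<bar> \<le> C" and "0 \<le> C"
  shows "\<bar>(LINT z:A|M. f z) / measure M A - (LINT z:B|M. f z) / measure M B\<bar>
     \<le> 2 * C * (measure M (A \<union> B - A \<inter> B) / max (measure M A) (measure M B))"
proof (cases "measure M B \<le> measure M A")
  case True
  then show ?thesis
    using abs_diff_set_averages_le[OF A B True pos(2) f \<open>0 \<le> C\<close>] by (simp add: max_absorb1)
next
  case False
  then have le: "measure M A \<le> measure M B" by simp
  from abs_diff_set_averages_le[OF B A le pos(1) f \<open>0 \<le> C\<close>] show ?thesis
    unfolding max_absorb2[OF le] by (simp add: abs_minus_commute Un_commute Int_commute)
qed

lemma set_integral_nonneg_mono_set: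
  fixes f :: "'a \<Rightarrow> real"
  assumes "A \<subseteq> B" "A \<in> sets M" "set_integrable M B f" "\<And>z. z \<in> B \<Longrightarrow> 0 \<le> f z"
  shows "(LINT z:A|M. f z) \<le> (LINT z:B|M. f z)"
  using assms set_integrable_subset[OF assms(3,2,1)]
  unfolding set_lebesgue_integral_def set_integrable_def
  by (intro integral_mono) (auto split: split_indicator)

lemma cball_integral_upper_semicontinuous:
  fixes M :: "'a::metric_space measure" and w :: "'a \<Rightarrow> real"
  assumes sets: "sets M = sets borel" and int: "\<And>c r. set_integrable M (cball c r) w"
    and nonneg: "\<And>z. 0 \<le> w z" and cont: "continuous_on S \<rho>" and x: "x \<in> S"
    and lt: "(LINT z:cball x (\<rho> x)|M. w z) < t"
  shows "\<exists>e>0. \<forall>y\<in>S. dist y x < e \<longrightarrow> (LINT z:cball y (\<rho> y)|M. w z) < t"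
proof -
  define A where "A i = cball x (\<rho> x + inverse (Suc i))" for i :: nat
  have A_sets: "A i \<in> sets M" for i
    using sets by (simp add: A_def)
  have "decseq A"
    unfolding A_def by (intro decseq_SucI subset_cball) (simp add: field_simps)
  have "(\<Inter>i. A i) = cball x (\<rho> x)"
  proof (intro equalityI subsetI)
    fix z assume "z \<in> (\<Inter>i. A i)"
    then have le: "dist x z \<le> \<rho> x + inverse (Suc i)" for i
      by (simp add: A_def)
    show "z \<in> cball x (\<rho> x)"
    proof (rule ccontr)
      assume "z \<notin> cball x (\<rho> x)"
      then obtain i where "inverse (real (Suc i)) < dist x z - \<rho> x"
        using reals_Archimedean[of "dist x z - \<rho> x"] by auto
      with le[of i] show False by simp
    qed
  qed (auto simp: A_def intro: add_increasing2)
  moreover have "set_integrable M (A 0) w"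
    unfolding A_def by (rule int)
  ultimately have "(\<lambda>i. LINT z:A i|M. w z) \<longlonglongrightarrow> (LINT z:cball x (\<rho> x)|M. w z)"
    using set_integral_cont_down[OF A_sets \<open>decseq A\<close>] by simp
  then have "\<forall>\<^sub>F i in sequentially. (LINT z:A i|M. w z) < t"
    using lt by (rule order_tendstoD(2))
  then obtain i where i: "(LINT z:A i|M. w z) < t"
    unfolding eventually_sequentially by blast
  define \<epsilon> where "\<epsilon> = inverse (real (Suc i))"
  have "\<epsilon> > 0" by (simp add: \<epsilon>_def)
  then obtain d where d: "d > 0" "\<forall>y\<in>S. dist y x < d \<longrightarrow> dist (\<rho> y) (\<rho> x) < \<epsilon> / 2"
    using cont x half_gt_zero unfolding continuous_on_iff by blast
  show ?thesis
  proof (intro exI[of _ "min d (\<epsilon> / 2)"] conjI ballI impI)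
    fix y assume y: "y \<in> S" "dist y x < min d (\<epsilon> / 2)"
    have "cball y (\<rho> y) \<subseteq> A i"
    proof
      fix z assume "z \<in> cball y (\<rho> y)"
      then have "dist x z \<le> dist x y + \<rho> y"
        using dist_triangle[of x z y] by simp
      moreover have "dist (\<rho> y) (\<rho> x) < \<epsilon> / 2" "dist x y < \<epsilon> / 2"
        using d y by (auto simp: dist_commute)
      ultimately show "z \<in> A i"
        using abs_ge_self[of "\<rho> y - \<rho> x"] unfolding A_def \<epsilon>_def[symmetric] dist_real_def by simp
    qed
    then have "(LINT z:cball y (\<rho> y)|M. w z) \<le> (LINT z:A i|M. w z)"
      by (rule set_integral_nonneg_mono_set) (use sets int nonneg in \<open>auto simp: A_def\<close>)
    with i show "(LINT z:cball y (\<rho> y)|M. w z) < t" by simp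
  qed (use d \<open>\<epsilon> > 0\<close> in auto)
qed

lemma borel_measurable_upper_semicontinuous_on_open:
  fixes f :: "'a::metric_space \<Rightarrow> real"
  assumes "open S"
    and usc: "\<And>x t. x \<in> S \<Longrightarrow> f x < t \<Longrightarrow> \<exists>e>0. \<forall>y\<in>S. dist y x < e \<longrightarrow> f y < t"
  shows "(\<lambda>x. if x \<in> S then f x else 0) \<in> borel_measurable borel"
  unfolding borel_measurable_iff_less
proof
  fix a :: real
  have "open {x\<in>S. f x < a}"
    unfolding open_dist
  proof
    fix x assume x: "x \<in> {x\<in>S. f x < a}"
    obtain e where e: "e > 0" "\<forall>y\<in>S. dist y x < e \<longrightarrow> f y < a"
      using usc x by blast
    obtain e' where e': "e' > 0" "\<forall>y. dist y x < e' \<longrightarrow> y \<in> S"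
      using \<open>open S\<close> x unfolding open_dist by blast
    show "\<exists>e>0. \<forall>y. dist y x < e \<longrightarrow> y \<in> {x \<in> S. f x < a}"
      using e e' by (intro exI[where x="min e e'"]) auto
  qed
  moreover have "{x \<in> space borel. (if x \<in> S then f x else 0) < a} =
     {x\<in>S. f x < a} \<union> (if 0 < a then - S else {})"
    by auto
  ultimately show "{x \<in> space borel. (if x \<in> S then f x else 0) < a} \<in> sets borel"
    using \<open>open S\<close> by auto
qed

lemma cball_integral_measurable:
  fixes M :: "'a::metric_space measure" and w :: "'a \<Rightarrow> real"
  assumes sets: "sets M = sets borel" and fin: "\<And>c r. emeasure M (cball c r) < \<infinity>"
    and w: "w \<in> borel_measurable M" "AE z in M. \<bar>w z\<bar> \<le> C"
    and "open S" and cont: "continuous_on S \<rho>"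
  shows "(\<lambda>x. if x \<in> S then LINT z:cball x (\<rho> x)|M. w z else 0) \<in> borel_measurable borel"
proof -
  define H where "H g x = (if x \<in> S then LINT z:cball x (\<rho> x)|M. g z else 0)"
    for g :: "'a \<Rightarrow> real" and x
  have int: "set_integrable M (cball c r) g"
    if "g \<in> borel_measurable M" "AE z in M. \<bar>g z\<bar> \<le> C" for g c r
    using sets fin that by (intro set_integrable_bounded) auto
  have nonneg: "H g \<in> borel_measurable borel"
    if g: "g \<in> borel_measurable M" "AE z in M. \<bar>g z\<bar> \<le> C" "\<And>z. 0 \<le> g z" for g
    unfolding H_def
    by (rule borel_measurable_upper_semicontinuous_on_open[OF \<open>open S\<close>],
        rule cball_integral_upper_semicontinuous[OF sets int[OF g(1,2)] g(3) cont])
  define wp wn where "wp z = max 0 (w z)" and "wn z = max 0 (- w z)" for z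
  have parts_measurable: "wp \<in> borel_measurable M" "wn \<in> borel_measurable M"
    unfolding wp_def[abs_def] wn_def[abs_def] using w(1) by measurable
  have parts_bounded: "AE z in M. \<bar>wp z\<bar> \<le> C" "AE z in M. \<bar>wn z\<bar> \<le> C"
    using w(2) by (auto simp: wp_def wn_def elim!: eventually_mono)
  have w_split: "w z = wp z - wn z" for z
    by (auto simp: wp_def wn_def)
  have "H w = (\<lambda>x. H wp x - H wn x)"
  proof
    fix x
    have "(LINT z:cball x (\<rho> x)|M. w z) = (LINT z:cball x (\<rho> x)|M. wp z - wn z)"
      by (simp only: w_split)
    also have "\<dots> = (LINT z:cball x (\<rho> x)|M. wp z) - (LINT z:cball x (\<rho> x)|M. wn z)"
      using int[OF parts_measurable(1) parts_bounded(1)] int[OF parts_measurable(2) parts_bounded(2)]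
      by (rule set_integral_diff(2))
    finally show "H w x = H wp x - H wn x"
      by (simp add: H_def)
  qed
  moreover have "H wp \<in> borel_measurable borel" "H wn \<in> borel_measurable borel"
    using parts_measurable parts_bounded by (auto intro!: nonneg simp: wp_def wn_def)
  ultimately show ?thesis
    unfolding H_def[symmetric] by simp
qed

locale averaging_domain =
  fixes \<mu> :: "'a::metric_space measure" and \<Omega> :: "'a set" and \<rho> :: "'a \<Rightarrow> real"
  assumes mm_space: "mm_space \<mu>" and open_domain: "open \<Omega>"
    and admissible: "admissible_radius \<Omega> \<rho>"
begin

lemma sets_eq_borel: "sets \<mu> = sets borel"
  using mm_space by (simp add: mm_space_def)

lemma domain_sets: "\<Omega> \<inter> space \<mu> \<in> sets \<mu>"
  using open_domain sets_eq_borel by auto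

lemma emeasure_cball_finite: "emeasure \<mu> (cball c r) < \<infinity>"
proof -
  have "emeasure \<mu> (cball c r) \<le> emeasure \<mu> (cball c (max r 1))"
    using sets_eq_borel by (intro emeasure_mono) auto
  also have "\<dots> < \<infinity>"
    using mm_space by (simp add: mm_space_def)
  finally show ?thesis .
qed

lemma measure_Bx_pos: "x \<in> \<Omega> \<Longrightarrow> 0 < measure \<mu> (Bx \<rho> x)"
  using mm_space admissible
  by (simp add: mm_space_def admissible_radius_def Bx_def measure_def enn2real_positive_iff)

lemma measurable_zero_extension_iff:
  "v \<in> borel_measurable (restrict_space \<mu> \<Omega>) \<longleftrightarrow>
     (\<lambda>z. if z \<in> \<Omega> then v z else 0) \<in> borel_measurable \<mu>"
  using measurable_restrict_space_iff[OF domain_sets, of 0 borel v] by simp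

lemma avg_op_eq_average:
  assumes "x \<in> \<Omega>"
  shows "avg_op \<mu> \<Omega> \<rho> v x =
     (LINT z:Bx \<rho> x|\<mu>. (if z \<in> \<Omega> then v z else 0)) / measure \<mu> (Bx \<rho> x)"
proof -
  have "(LINT z:Bx \<rho> x \<inter> \<Omega>|\<mu>. v z) = (LINT z:Bx \<rho> x|\<mu>. (if z \<in> \<Omega> then v z else 0))"
    unfolding set_lebesgue_integral_def
    by (rule Bochner_Integration.integral_cong) (auto split: split_indicator)
  then show ?thesis
    using assms by (simp add: avg_op_def)
qed

lemma avg_op_measurable:
  assumes v: "v \<in> borel_measurable (restrict_space \<mu> \<Omega>)" "AE z in \<mu>. z \<in> \<Omega> \<longrightarrow> \<bar>v z\<bar> \<le> C"
    and "0 \<le> C"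
  shows "avg_op \<mu> \<Omega> \<rho> v \<in> borel_measurable (restrict_space \<mu> \<Omega>)"
proof -
  define H where "H w x = (if x \<in> \<Omega> then LINT z:cball x (\<rho> x)|\<mu>. w z else 0)"
    for w :: "'a \<Rightarrow> real" and x
  have cont: "continuous_on \<Omega> \<rho>"
    using admissible closure_subset by (auto simp: admissible_radius_def intro: continuous_on_subset)
  have H: "H w \<in> borel_measurable borel"
    if "w \<in> borel_measurable \<mu>" "AE z in \<mu>. \<bar>w z\<bar> \<le> D" for w D
    unfolding H_def
    by (rule cball_integral_measurable[OF sets_eq_borel emeasure_cball_finite that open_domain cont])
  have "H (\<lambda>z. if z \<in> \<Omega> then v z else 0) \<in> borel_measurable borel"
    using v \<open>0 \<le> C\<close> by (intro H) (auto simp: measurable_zero_extension_iff elim: eventually_mono)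
  moreover have "H (\<lambda>z. 1) \<in> borel_measurable borel"
    by (rule H[where D=1]) auto
  moreover have "avg_op \<mu> \<Omega> \<rho> v = (\<lambda>x. H (\<lambda>z. if z \<in> \<Omega> then v z else 0) x / H (\<lambda>z. 1) x)"
  proof
    fix x
    show "avg_op \<mu> \<Omega> \<rho> v x = H (\<lambda>z. if z \<in> \<Omega> then v z else 0) x / H (\<lambda>z. 1) x"
    proof (cases "x \<in> \<Omega>")
      case True
      have "(LINT z:cball x (\<rho> x)|\<mu>. 1) = measure \<mu> (cball x (\<rho> x))"
        using set_integral_const[of "cball x (\<rho> x)" \<mu> "1::real"] sets_eq_borel
          emeasure_cball_finite[of x "\<rho> x"] by simp
      with True show ?thesis
        by (simp add: H_def avg_op_eq_average Bx_def)
    qed (simp add: H_def avg_op_def)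
  qed
  ultimately have "avg_op \<mu> \<Omega> \<rho> v \<in> borel_measurable borel"
    by (simp add: borel_measurable_divide)
  then show ?thesis
    by (intro measurable_restrict_space1) (simp add: measurable_cong_sets[OF sets_eq_borel refl])
qed

lemma avg_op_abs_le:
  assumes "AE z in \<mu>. z \<in> \<Omega> \<longrightarrow> \<bar>v z\<bar> \<le> C" "0 \<le> C" "x \<in> \<Omega>"
  shows "\<bar>avg_op \<mu> \<Omega> \<rho> v x\<bar> \<le> C"
proof -
  have "\<bar>LINT z:Bx \<rho> x|\<mu>. (if z \<in> \<Omega> then v z else 0)\<bar> \<le> C * measure \<mu> (Bx \<rho> x)"
    using assms sets_eq_borel emeasure_cball_finite
    by (intro set_integral_abs_le_measure) (auto simp: Bx_def elim: eventually_mono)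
  then show ?thesis
    using measure_Bx_pos[OF \<open>x \<in> \<Omega>\<close>] \<open>x \<in> \<Omega>\<close>
    by (simp add: avg_op_eq_average abs_div divide_le_eq)
qed

lemma avg_op_abs_diff_le:
  assumes v: "v \<in> borel_measurable (restrict_space \<mu> \<Omega>)" "AE z in \<mu>. z \<in> \<Omega> \<longrightarrow> \<bar>v z\<bar> \<le> C"
    and "0 \<le> C" and x: "x \<in> \<Omega>" and y: "y \<in> \<Omega>"
  shows "\<bar>avg_op \<mu> \<Omega> \<rho> v x - avg_op \<mu> \<Omega> \<rho> v y\<bar>
     \<le> 2 * C * (measure \<mu> (Bx \<rho> x \<union> Bx \<rho> y - Bx \<rho> x \<inter> Bx \<rho> y)
               / max (measure \<mu> (Bx \<rho> x)) (measure \<mu> (Bx \<rho> y)))"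
  unfolding avg_op_eq_average[OF x] avg_op_eq_average[OF y]
  using v \<open>0 \<le> C\<close> sets_eq_borel emeasure_cball_finite measure_Bx_pos[OF x] measure_Bx_pos[OF y]
  by (intro abs_diff_set_averages_le_max)
    (auto simp: Bx_def measurable_zero_extension_iff elim: eventually_mono)

lemma avg_op_iterate_bounded:
  assumes "v \<in> borel_measurable (restrict_space \<mu> \<Omega>)" "AE z in \<mu>. z \<in> \<Omega> \<longrightarrow> \<bar>v z\<bar> \<le> C"
    and "0 \<le> C"
  shows "(avg_op \<mu> \<Omega> \<rho> ^^ m) v \<in> borel_measurable (restrict_space \<mu> \<Omega>) \<and>
    (AE z in \<mu>. z \<in> \<Omega> \<longrightarrow> \<bar>(avg_op \<mu> \<Omega> \<rho> ^^ m) v z\<bar> \<le> C)"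
proof (induction m)
  case 0
  then show ?case using assms by simp
next
  case (Suc m)
  then show ?case
    using avg_op_measurable avg_op_abs_le \<open>0 \<le> C\<close> by auto
qed

lemma Linf_norm_finite_bound:
  assumes "in_Linf \<mu> \<Omega> u" and "\<Omega> \<noteq> {}"
  obtains C where "0 \<le> C" "Linf_norm \<mu> \<Omega> u = ereal C"
    "AE z in \<mu>. z \<in> \<Omega> \<longrightarrow> \<bar>u z\<bar> \<le> C"
proof -
  obtain x r where "x \<in> \<Omega>" "r > 0" "ball x r \<subseteq> \<Omega>"
    using assms(2) open_domain open_contains_ball by blast
  then have "0 < emeasure \<mu> (ball x r)" "emeasure \<mu> (ball x r) \<le> emeasure \<mu> \<Omega>"
    using mm_space sets_eq_borel open_domain by (auto simp: mm_space_def intro!: emeasure_mono)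
  then have "emeasure (restrict_space \<mu> \<Omega>) (space (restrict_space \<mu> \<Omega>)) \<noteq> 0"
    using emeasure_restrict_space[OF domain_sets] sets_eq_imp_space_eq[OF sets_eq_borel]
    by (simp add: space_restrict_space)
  then have "0 = esssup (restrict_space \<mu> \<Omega>) (\<lambda>_. ereal 0)"
    by (simp add: esssup_const)
  also have "\<dots> \<le> Linf_norm \<mu> \<Omega> u"
    unfolding Linf_norm_def by (rule esssup_mono) auto
  finally have "0 \<le> Linf_norm \<mu> \<Omega> u" .
  moreover have "Linf_norm \<mu> \<Omega> u < \<infinity>"
    using assms(1) by (simp add: in_Linf_def)
  ultimately obtain C where "Linf_norm \<mu> \<Omega> u = ereal C" "0 \<le> C"
    by (cases "Linf_norm \<mu> \<Omega> u") auto
  moreover have "AE z in \<mu>. z \<in> \<Omega> \<longrightarrow> \<bar>u z\<bar> \<le> C"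
    using esssup_AE[of "\<lambda>z. ereal \<bar>u z\<bar>" "restrict_space \<mu> \<Omega>"] calculation
    unfolding Linf_norm_def AE_restrict_space_iff[OF domain_sets] by simp
  ultimately show ?thesis
    using that by blast
qed

end

theorem corollary3p2:
  fixes \<mu> :: "'a::metric_space measure" and \<Omega> :: "'a set" and \<rho> :: "'a \<Rightarrow> real"
    and u :: "'a \<Rightarrow> real" and x y :: 'a and n :: nat
  assumes "mm_space \<mu>" and "domain \<Omega>" and "admissible_radius \<Omega> \<rho>"
    and "in_Linf \<mu> \<Omega> u" and "x \<in> \<Omega>" and "y \<in> \<Omega>" and "n \<ge> 1"
  shows "ereal \<bar>(avg_op \<mu> \<Omega> \<rho> ^^ n) u x - (avg_op \<mu> \<Omega> \<rho> ^^ n) u y\<bar>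
     \<le> 2 * Linf_norm \<mu> \<Omega> u *
        ereal (measure \<mu> (Bx \<rho> x \<union> Bx \<rho> y - Bx \<rho> x \<inter> Bx \<rho> y)
               / max (measure \<mu> (Bx \<rho> x)) (measure \<mu> (Bx \<rho> y)))"
proof -
  interpret averaging_domain \<mu> \<Omega> \<rho>
    using assms(1-3) by unfold_locales (simp_all add: domain_def)
  obtain C where C: "0 \<le> C" "Linf_norm \<mu> \<Omega> u = ereal C"
    "AE z in \<mu>. z \<in> \<Omega> \<longrightarrow> \<bar>u z\<bar> \<le> C"
    using Linf_norm_finite_bound assms(2,4) unfolding domain_def by blast
  obtain m where n: "n = Suc m"
    using \<open>n \<ge> 1\<close> by (cases n) auto
  have "\<bar>avg_op \<mu> \<Omega> \<rho> ((avg_op \<mu> \<Omega> \<rho> ^^ m) u) x - avg_op \<mu> \<Omega> \<rho> ((avg_op \<mu> \<Omega> \<rho> ^^ m) u) y\<bar>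
     \<le> 2 * C * (measure \<mu> (Bx \<rho> x \<union> Bx \<rho> y - Bx \<rho> x \<inter> Bx \<rho> y)
               / max (measure \<mu> (Bx \<rho> x)) (measure \<mu> (Bx \<rho> y)))"
    using avg_op_iterate_bounded[OF _ C(3,1)] assms(4-6) C(1)
    by (intro avg_op_abs_diff_le) (auto simp: in_Linf_def)
  then show ?thesis
    using C(2) by (simp add: n)
qed

end
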